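(* There is an absolute constant $K>0$ such that the following holds. Let $U \geqslant 2$ and $n\geqslant 2$ be integers. Let $A, B, X \subseteq [U]$ with $|A|=|B|=n$ and $X$ nonempty. Then there exists a set $M$ of integers with the following properties: - $|M| \leqslant 1 + \log_2 |X|$; - $M \subseteq [n^{1.5}, 8n^{1.5})$; - for every $x \in X$ there exists $m \in M$ with \[\#\{(a,b) \in A \times B : a+b \equiv x \pmod m \ \text{and}\ a+b \neq x\} \leqslant K\sqrt n\,(\log U)^3.\]
   Context: $[U] := \{0,1,\ldots,U-1\}$; $[x,y)$ for reals denotes the half-open real interval. *)

theory Defs
  imports "HOL-Analysis.Analysis" "HOL-Number_Theory.Cong"
begin

end

theory Submission
  imports Defs "HOL-Computational_Algebra.Primes" "HOL-Real_Asymp.Real_Asymp"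
begin

(* Fix a target x and a prime modulus p >= P. A pair (a, b) with a + b ~= x is a false positive
   for p only if p divides the nonzero integer a + b - x, whose absolute value is below 2U; so each
   pair is a false positive for at most log (2U) / log P primes, and summed over the primes of the
   window [P, 8P) there are at most |A| |B| log (2U) / log P false positives. A Chebyshev bound in
   Erdos' style (prime powers dividing the central binomial coefficient are at most 2N, and the
   product of the primes up to n is at most 4^n) puts at least about P / (2 log P) primes into the
   window. Averaging, for every x at least half of the window primes have at most
   4 |A| |B| log (2U) / P false positives, which is O(sqrt n log U) for P = n^(3/2). Hence some prime
   serves at least half of the remaining targets, and iterating covers X by at most 1 + log2 |X|
   primes. Small n are absorbed into the constant, using a single modulus. *)

section \<open>Legendre's formula and the central binomial coefficient\<close>

lemma multiplicity_le_self:
  assumes "prime (p::nat)" "m > 0"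
  shows "multiplicity p m \<le> m"
proof -
  have "multiplicity p m < 2 ^ multiplicity p m" by (rule less_exp)
  also have "\<dots> \<le> p ^ multiplicity p m"
    using prime_ge_2_nat[OF assms(1)] by (intro power_mono) auto
  also have "\<dots> \<le> m" using assms(2) by (intro dvd_imp_le multiplicity_dvd)
  finally show ?thesis by simp
qed

lemma legendre_formula:
  assumes p: "prime (p::nat)" and "n \<le> M"
  shows "multiplicity p (fact n :: nat) = (\<Sum>k\<in>{1..M}. n div p ^ k)"
  using assms(2)
proof (induction n)
  case 0
  then show ?case by simp
next
  case (Suc n)
  have p1: "p > 1" using p prime_gt_1_nat by blast
  have "{k\<in>{1..M}. p ^ k dvd Suc n} = {1..multiplicity p (Suc n)}"
    using multiplicity_le_self[OF p, of "Suc n"] Suc.prems p1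
    by (auto simp: power_dvd_iff_le_multiplicity)
  then have "multiplicity p (Suc n) = (\<Sum>k\<in>{1..M}. if p ^ k dvd Suc n then 1 else 0)"
    by (simp add: sum.inter_filter[symmetric])
  moreover have "multiplicity p (Suc n * fact n :: nat) = multiplicity p (Suc n) + multiplicity p (fact n :: nat)"
    using p by (intro prime_elem_multiplicity_mult_distrib) auto
  moreover have "Suc n div p ^ k = n div p ^ k + (if p ^ k dvd Suc n then 1 else 0)" for k
    using p1 by (simp add: div_Suc mod_eq_0_iff_dvd)
  ultimately show ?case
    using Suc by (simp add: sum.distrib fact_Suc)
qed

lemma div_double_bounds:
  fixes N d :: nat assumes "d > 0"
  shows "2 * (N div d) \<le> (2*N) div d" "(2*N) div d \<le> 2 * (N div d) + 1"
proof -
  have "2*N = d * (2 * (N div d)) + 2 * (N mod d)"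
    by (metis add.commute distrib_left_numeral mod_mult_div_eq mult.left_commute)
  then have eq: "(2*N) div d = 2 * (N div d) + (2 * (N mod d)) div d"
    using div_mult1_eq by blast
  have "2 * (N mod d) < 2 * d" using assms by simp
  then have "(2 * (N mod d)) div d < 2" using assms by (simp add: div_less_iff_less_mult mult.commute)
  with eq show "2 * (N div d) \<le> (2*N) div d" "(2*N) div d \<le> 2 * (N div d) + 1" by linarith+
qed

lemma prime_power_multiplicity_central_binomial_le:
  assumes p: "prime (p::nat)" and N: "N \<ge> 1"
  shows "p ^ multiplicity p ((2*N) choose N) \<le> 2*N"
proof (rule ccontr)
  define v where "v = multiplicity p ((2*N) choose N)"
  assume "\<not> p ^ multiplicity p ((2*N) choose N) \<le> 2*N"
  then have big: "2*N < p ^ v" unfolding v_def by simp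
  have p1: "p > 1" using p prime_gt_1_nat by blast
  have "fact (2*N) = ((2*N) choose N) * fact N * (fact N :: nat)"
    using binomial_fact_lemma[of N "2*N"] by (simp add: algebra_simps)
  then have "multiplicity p (fact (2*N) :: nat) = v + 2 * multiplicity p (fact N :: nat)"
    unfolding v_def using p by (simp add: prime_elem_multiplicity_mult_distrib)
  then have "v = (\<Sum>k\<in>{1..2*N}. (2*N) div p ^ k) - (\<Sum>k\<in>{1..2*N}. 2 * (N div p ^ k))"
    using legendre_formula[OF p, of "2*N" "2*N"] legendre_formula[OF p, of N "2*N"]
    by (simp add: sum_distrib_left)
  also have "\<dots> = (\<Sum>k\<in>{1..2*N}. (2*N) div p ^ k - 2 * (N div p ^ k))"
    using div_double_bounds p1 by (intro sum_subtractf_nat[symmetric]) auto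
  \<comment> \<open>each summand is 0 or 1, and it vanishes as soon as p^k > 2N\<close>
  also have "\<dots> \<le> (\<Sum>k\<in>{1..2*N}. if k < v then 1 else 0)"
  proof (intro sum_mono)
    fix k
    show "(2*N) div p ^ k - 2 * (N div p ^ k) \<le> (if k < v then 1 else 0)"
    proof (cases "k < v")
      case False
      then have "p ^ v \<le> p ^ k" using p1 by (intro power_increasing) auto
      then have "2*N < p ^ k" using big by simp
      then show ?thesis using False by simp
    qed (use div_double_bounds[of "p^k" N] p1 in simp)
  qed
  also have "\<dots> = card {k\<in>{1..2*N}. k < v}" by (simp add: sum.inter_filter[symmetric])
  also have "\<dots> \<le> card {1..<v}" by (intro card_mono) auto
  finally have "v \<le> v - 1" by simp
  moreover have "v \<ge> 1" using big N by (cases v) auto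
  ultimately show False by simp
qed

section \<open>Chebyshev bound for primes in a window\<close>

lemma prod_primes_dvd:
  fixes x :: "'a :: factorial_semiring_gcd"
  assumes "finite T" "\<And>p. p \<in> T \<Longrightarrow> prime p \<and> p dvd x"
  shows "\<Prod>T dvd x"
  using assms
proof (induction T rule: finite_induct)
  case empty
  then show ?case by simp
next
  case (insert p T)
  have p: "prime p" "p dvd x" using insert by auto
  have "\<not> p dvd \<Prod>T"
  proof
    assume "p dvd \<Prod>T"
    then obtain q where "q \<in> T" "p dvd q" using prime_dvd_prod_iff[OF insert(1) p(1), of id] by auto
    with insert p show False using primes_dvd_imp_eq by blast
  qed
  then have "coprime p (\<Prod>T)" using p prime_imp_coprime by blast
  with insert p show ?case by (simp add: divides_mult)
qed

lemma binomial_odd_le_four_power: "(2*m+1) choose m \<le> 4 ^ m"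
proof -
  have "2 * ((2*m+1) choose m) = ((2*m+1) choose m) + ((2*m+1) choose (m+1))"
    using binomial_symmetric[of m "2*m+1"] by simp
  also have "\<dots> = (\<Sum>k\<in>{m, m+1}. (2*m+1) choose k)" by simp
  also have "\<dots> \<le> (\<Sum>k\<le>2*m+1. (2*m+1) choose k)" by (intro sum_mono2) auto
  also have "\<dots> = 2 ^ (2*m+1)" by (rule choose_row_sum)
  also have "\<dots> = 2 * 4 ^ m" by (simp add: power_mult)
  finally show ?thesis by simp
qed

lemma prod_primes_dvd_binomial_odd:
  "\<Prod>{p. prime p \<and> m+1 < p \<and> p \<le> 2*m+1} dvd (2*m+1) choose m"
proof (rule prod_primes_dvd)
  fix p assume "p \<in> {p. prime p \<and> m+1 < p \<and> p \<le> 2*m+1}"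
  then have p: "prime p" "m+1 < p" "p \<le> 2*m+1" by auto
  have "p dvd fact m * fact (m+1) * ((2*m+1) choose m)"
    using binomial_fact_lemma[of m "2*m+1"] p prime_dvd_fact_iff[of p "2*m+1"] by simp
  moreover have "\<not> p dvd fact m" "\<not> p dvd fact (m+1)"
    using p by (simp_all add: prime_dvd_fact_iff del: fact_Suc)
  ultimately show "prime p \<and> p dvd (2*m+1) choose m"
    using p by (simp add: prime_dvd_mult_iff del: fact_Suc)
qed simp

lemma primorial_le_four_power: "\<Prod>{p::nat. prime p \<and> p \<le> n} \<le> 4 ^ n"
proof (induction n rule: less_induct)
  case (less n)
  consider "n \<le> 2" | "n > 2" "even n" | m where "n = 2*m+1" "m \<ge> 1"
  proof (cases "n \<le> 2")
    case False
    show ?thesis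
    proof (cases "even n")
      case True
      then show ?thesis using False that(2) by simp
    next
      case False
      then obtain m where "n = 2*m+1" using oddE by blast
      then show ?thesis using \<open>\<not> n \<le> 2\<close> that(3) by simp
    qed
  qed (rule that(1))
  then show ?case
  proof cases
    case 1
    then have "{p::nat. prime p \<and> p \<le> n} = (if n = 2 then {2} else {})"
      by (auto dest: prime_ge_2_nat)
    then show ?thesis by simp
  next
    case 2
    then have "{p::nat. prime p \<and> p \<le> n} = {p. prime p \<and> p \<le> n - 1}"
      using prime_odd_nat le_eq_less_or_eq by fastforce
    with less[of "n - 1"] 2 show ?thesis by (simp add: le_trans)
  next
    case 3
    have split: "{p::nat. prime p \<and> p \<le> n} =
        {p. prime p \<and> p \<le> m+1} \<union> {p. prime p \<and> m+1 < p \<and> p \<le> 2*m+1}"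
      using 3 by auto
    have "\<Prod>{p::nat. prime p \<and> p \<le> n} =
        \<Prod>{p. prime p \<and> p \<le> m+1} * \<Prod>{p. prime p \<and> m+1 < p \<and> p \<le> 2*m+1}"
      unfolding split by (intro prod.union_disjoint) auto
    also have "\<dots> \<le> 4 ^ (m+1) * 4 ^ m"
    proof (intro mult_le_mono)
      show "\<Prod>{p. prime p \<and> p \<le> m+1} \<le> 4 ^ (m+1)"
        using 3 by (intro less) simp
      have "\<Prod>{p. prime p \<and> m+1 < p \<and> p \<le> 2*m+1} \<le> (2*m+1) choose m"
        by (intro dvd_imp_le prod_primes_dvd_binomial_odd) simp
      then show "\<Prod>{p. prime p \<and> m+1 < p \<and> p \<le> 2*m+1} \<le> 4 ^ m"
        using binomial_odd_le_four_power order_trans by blast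
    qed
    also have "\<dots> = 4 ^ n" using 3 by (simp flip: power_add)
    finally show ?thesis .
  qed
qed

lemma central_binomial_eq_prod_prime_powers:
  assumes "finite P" "{p. prime p \<and> p \<le> 2*N} \<subseteq> P" "P \<subseteq> {p. prime p}"
  shows "(2*N) choose N = (\<Prod>p\<in>P. p ^ multiplicity p ((2*N) choose N))"
proof -
  let ?C = "(2*N) choose N"
  have "fact N * fact (2*N - N) * ?C = fact (2*N)" by (rule binomial_fact_lemma) simp
  then have "?C dvd fact (2*N)" by (metis dvd_triv_right)
  have "prime_factors ?C \<subseteq> {p. prime p \<and> p \<le> 2*N}"
  proof
    fix p assume "p \<in> prime_factors ?C"
    then have "prime p" "p dvd fact (2*N)"
      using \<open>?C dvd fact (2*N)\<close> by (auto simp: in_prime_factors_iff intro: dvd_trans)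
    then show "p \<in> {p. prime p \<and> p \<le> 2*N}" by (simp add: prime_dvd_fact_iff)
  qed
  with assms(2) have "prime_factors ?C \<subseteq> P" by blast
  moreover have "p ^ multiplicity p ?C = 1" if "p \<in> P - prime_factors ?C" for p
    using that assms(3) by (auto simp: not_dvd_imp_multiplicity_0 in_prime_factors_iff)
  ultimately have "(\<Prod>p\<in>prime_factors ?C. p ^ multiplicity p ?C) = (\<Prod>p\<in>P. p ^ multiplicity p ?C)"
    using assms(1) by (intro prod.mono_neutral_left) auto
  then show ?thesis using prime_factorization_nat[of ?C] by simp
qed

lemma prod_small_prime_powers_central_binomial_le:
  assumes N: "N \<ge> 1" and r: "2*N < r*r"
  shows "(\<Prod>p | prime p \<and> p < Q. p ^ multiplicity p ((2*N) choose N)) \<le> (2*N) ^ r * 4 ^ Q"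
proof -
  let ?v = "\<lambda>p. multiplicity p ((2*N) choose N)"
  let ?small = "{p. prime p \<and> p < Q}"
  have "p ^ ?v p \<le> (if p < r then 2*N else 1) * p" if "p \<in> ?small" for p
  proof -
    have p: "prime p" using that by simp
    have pv: "p ^ ?v p \<le> 2*N" by (rule prime_power_multiplicity_central_binomial_le[OF p N])
    show ?thesis
    proof (cases "p < r")
      case True
      have "2*N \<le> 2*N * p" using prime_gt_0_nat[OF p] by simp
      then show ?thesis using True order_trans[OF pv] by simp
    next
      case False
      then have "p ^ ?v p < p ^ 2" using pv r mult_le_mono[of r p r p] by (simp add: power2_eq_square)
      then have "?v p \<le> 1" using prime_gt_1_nat[OF p] power_less_imp_less_exp by fastforce
      then have "p ^ ?v p \<le> p ^ 1" using prime_gt_0_nat[OF p] by (intro power_increasing) auto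
      then show ?thesis using False by simp
    qed
  qed
  then have "(\<Prod>p\<in>?small. p ^ ?v p) \<le> (\<Prod>p\<in>?small. (if p < r then 2*N else 1) * p)"
    by (intro prod_mono) auto
  also have "\<dots> = (2*N) ^ card {p\<in>?small. p < r} * \<Prod>?small"
    by (simp add: prod.distrib prod.inter_filter[symmetric])
  also have "\<dots> \<le> (2*N) ^ r * 4 ^ Q"
  proof (intro mult_le_mono)
    have "card {p\<in>?small. p < r} \<le> card {..<r}" by (intro card_mono) auto
    then show "(2*N) ^ card {p\<in>?small. p < r} \<le> (2*N) ^ r" using N by (intro power_increasing) auto
    have "\<Prod>?small \<le> \<Prod>{p. prime p \<and> p \<le> Q}"
      by (intro dvd_imp_le prod_dvd_prod_subset) (auto intro: prime_gt_0_nat)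
    then show "\<Prod>?small \<le> 4 ^ Q" using primorial_le_four_power order_trans by blast
  qed
  finally show ?thesis .
qed

lemma four_power_le_prime_window:
  assumes N: "N \<ge> 1" and r: "2*N < r*r"
  shows "4 ^ N \<le> (2*N) ^ (r + 1 + card {p. prime p \<and> Q \<le> p \<and> p \<le> 2*N}) * 4 ^ Q"
proof -
  let ?C = "(2*N) choose N"
  let ?v = "\<lambda>p. multiplicity p ?C"
  let ?small = "{p. prime p \<and> p < Q}"
  let ?W = "{p. prime p \<and> Q \<le> p \<and> p \<le> 2*N}"
  have "?C = (\<Prod>p\<in>?small \<union> ?W. p ^ ?v p)"
    by (intro central_binomial_eq_prod_prime_powers) auto
  also have "\<dots> = (\<Prod>p\<in>?small. p ^ ?v p) * (\<Prod>p\<in>?W. p ^ ?v p)"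
    by (intro prod.union_disjoint) auto
  also have "\<dots> \<le> ((2*N) ^ r * 4 ^ Q) * (2*N) ^ card ?W"
  proof (intro mult_le_mono prod_small_prime_powers_central_binomial_le[OF N r])
    have "(\<Prod>p\<in>?W. p ^ ?v p) \<le> (\<Prod>p\<in>?W. 2*N)"
      using prime_power_multiplicity_central_binomial_le N by (intro prod_mono) auto
    then show "(\<Prod>p\<in>?W. p ^ ?v p) \<le> (2*N) ^ card ?W" by simp
  qed
  finally have "2*N * ?C \<le> (2*N) ^ (r + 1 + card ?W) * 4 ^ Q"
    by (simp add: power_add algebra_simps)
  moreover have "4 ^ N \<le> 2*N * ?C"
  proof -
    have "4 ^ N / (2 * real N) \<le> real ?C" using N by (intro central_binomial_lower_bound) simp
    then have "real (4 ^ N) \<le> real (2*N * ?C)" using N by (simp add: field_simps)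
    then show ?thesis by (simp only: of_nat_le_iff)
  qed
  ultimately show ?thesis by linarith
qed

lemma primes_in_window_lower_bound:
  assumes Q: "Q \<ge> 1"
  shows "2 * (real Q * ln 4) \<le> (sqrt (6 * real Q) + 2) * ln (6 * real Q) +
    real (card {p. prime p \<and> Q \<le> p \<and> p \<le> 6*Q}) * ln (6 * real Q)"
proof -
  define c where "c = card {p. prime p \<and> Q \<le> p \<and> p \<le> 6*Q}"
  define L where "L = ln (6 * real Q)"
  define r where "r = nat \<lfloor>sqrt (6 * real Q)\<rfloor> + 1"
  have r: "sqrt (6 * real Q) < real r" "real r \<le> sqrt (6 * real Q) + 1"
    unfolding r_def using real_sqrt_ge_zero[of "6 * real Q"] by linarith+
  have "6 * real Q = sqrt (6 * real Q) * sqrt (6 * real Q)" by simp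
  also have "\<dots> < real r * real r"
    using r(1) real_sqrt_ge_zero[of "6 * real Q"] by (intro mult_strict_mono) linarith+
  finally have "2 * (3*Q) < r * r" by (simp flip: of_nat_mult)
  then have "4 ^ (3*Q) \<le> (6*Q) ^ (r + 1 + c) * 4 ^ Q"
    unfolding c_def using four_power_le_prime_window[of "3*Q" r Q] Q by simp
  then have "real (4 ^ (3*Q)) \<le> real ((6*Q) ^ (r + 1 + c) * 4 ^ Q)"
    by (simp only: of_nat_le_iff)
  then have "(4::real) ^ (3*Q) \<le> (6 * real Q) ^ (r + 1 + c) * 4 ^ Q"
    by (simp only: of_nat_mult of_nat_power of_nat_numeral)
  then have "ln ((4::real) ^ (3*Q)) \<le> ln ((6 * real Q) ^ (r + 1 + c) * 4 ^ Q)"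
    using Q by (subst ln_le_cancel_iff) auto
  then have "2 * (real Q * ln 4) \<le> (real r + 1 + real c) * L"
    using Q by (simp add: L_def ln_mult ln_realpow algebra_simps)
  also have "\<dots> \<le> (sqrt (6 * real Q) + 2 + real c) * L"
    using r Q by (intro mult_right_mono) (auto simp: L_def)
  also have "\<dots> = (sqrt (6 * real Q) + 2) * L + real c * L" by (simp add: algebra_simps)
  finally show ?thesis unfolding c_def L_def .
qed

lemma eventually_many_primes_in_window:
  "\<forall>\<^sub>F Q in sequentially. real Q \<le> real (card {p. prime p \<and> Q \<le> p \<and> p \<le> 6*Q}) * ln (6 * real Q)"
proof -
  have "\<forall>\<^sub>F x in at_top. x + (sqrt (6*x) + 2) * ln (6*x) \<le> 2 * (x::real)" by real_asymp
  then obtain x0 where x0: "\<And>x. x \<ge> x0 \<Longrightarrow> x + (sqrt (6*x) + 2) * ln (6*x) \<le> 2*x"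
    unfolding eventually_at_top_linorder by blast
  have "1 \<le> ln (4::real)" using ln_ge_iff[of 4 1] exp_le by simp
  show ?thesis
  proof (rule eventually_sequentiallyI)
    fix Q :: nat assume Q: "Q \<ge> max 1 (nat \<lceil>x0\<rceil>)"
    have "real Q \<le> real Q * ln 4" using \<open>1 \<le> ln 4\<close> by (simp add: mult_le_cancel_left1)
    then show "real Q \<le> real (card {p. prime p \<and> Q \<le> p \<and> p \<le> 6*Q}) * ln (6 * real Q)"
      using primes_in_window_lower_bound[of Q] x0[of "real Q"] Q by linarith
  qed
qed

lemma finite_int_window: "finite {p::int. Q p \<and> a \<le> real_of_int p \<and> real_of_int p < b}"
proof -
  have "{p::int. Q p \<and> a \<le> real_of_int p \<and> real_of_int p < b} \<subseteq> {\<lceil>a\<rceil>..\<lfloor>b\<rfloor>}"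
    by (auto simp: ceiling_le_iff le_floor_iff)
  then show ?thesis by (rule finite_subset) simp
qed

lemma eventually_many_primes_in_real_window:
  "\<forall>\<^sub>F P::real in at_top. P \<le> 2 * real (card {p::int. prime p \<and> P \<le> p \<and> p < 8 * P}) * ln P"
proof -
  obtain Q0 where Q0: "\<And>Q. Q \<ge> Q0 \<Longrightarrow>
      real Q \<le> real (card {p. prime p \<and> Q \<le> p \<and> p \<le> 6*Q}) * ln (6 * real Q)"
    using eventually_many_primes_in_window unfolding eventually_sequentially by blast
  show ?thesis
  proof (rule eventually_at_top_linorderI)
    fix P :: real assume P: "P \<ge> max 7 (real Q0)"
    define Q where "Q = nat \<lceil>P\<rceil>"
    let ?W = "{p::int. prime p \<and> P \<le> p \<and> p < 8 * P}"
    have Q: "P \<le> real Q" "real Q < P + 1" unfolding Q_def using P by linarith+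
    have "finite ?W" by (rule finite_int_window)
    moreover have "int ` {p. prime p \<and> Q \<le> p \<and> p \<le> 6*Q} \<subseteq> ?W"
      using Q P by auto
    ultimately have "card (int ` {p. prime p \<and> Q \<le> p \<and> p \<le> 6*Q}) \<le> card ?W"
      by (rule card_mono)
    then have "card {p. prime p \<and> Q \<le> p \<and> p \<le> 6*Q} \<le> card ?W"
      by (simp add: card_image)
    moreover have "ln (6 * real Q) \<le> 2 * ln P"
    proof -
      have "7 * P \<le> P * P" using P by (intro mult_right_mono) auto
      then have "6 * real Q \<le> P * P" using Q P by linarith
      then have "ln (6 * real Q) \<le> ln (P * P)" using Q P by (subst ln_le_cancel_iff) auto
      then show ?thesis using P by (simp add: ln_mult)
    qed
    moreover have "real Q \<le> real (card {p. prime p \<and> Q \<le> p \<and> p \<le> 6*Q}) * ln (6 * real Q)"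
      using Q P by (intro Q0) linarith
    moreover have "0 \<le> ln (6 * real Q)" using Q P by simp
    ultimately have "real Q \<le> real (card ?W) * (2 * ln P)"
      by (smt (verit) mult_mono of_nat_0_le_iff of_nat_le_iff)
    then show "P \<le> 2 * real (card ?W) * ln P" using Q by simp
  qed
qed

section \<open>Averaging and greedy covering\<close>

lemma sum_card_filter_swap:
  assumes "finite S" "finite X"
  shows "(\<Sum>m\<in>S. card {x\<in>X. R m x}) = (\<Sum>x\<in>X. card {m\<in>S. R m x})"
proof -
  have card_filter: "card {y\<in>Y. P y} = (\<Sum>y\<in>Y. if P y then 1 else 0)" if "finite Y" for Y P
    using that by (simp add: sum.inter_filter[symmetric])
  have "(\<Sum>m\<in>S. card {x\<in>X. R m x}) = (\<Sum>m\<in>S. \<Sum>x\<in>X. if R m x then 1 else 0)"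
    using assms by (simp add: card_filter)
  also have "\<dots> = (\<Sum>x\<in>X. \<Sum>m\<in>S. if R m x then 1 else 0)" by (rule sum.swap)
  also have "\<dots> = (\<Sum>x\<in>X. card {m\<in>S. R m x})"
    using assms by (simp add: card_filter)
  finally show ?thesis .
qed

lemma card_exceeding_mult_le_sum:
  fixes f :: "'a \<Rightarrow> real"
  assumes "finite S" "\<And>m. m \<in> S \<Longrightarrow> 0 \<le> f m"
  shows "real (card {m\<in>S. T < f m}) * T \<le> (\<Sum>m\<in>S. f m)"
proof -
  have "real (card {m\<in>S. T < f m}) * T = (\<Sum>m\<in>{m\<in>S. T < f m}. T)" by simp
  also have "\<dots> \<le> (\<Sum>m\<in>{m\<in>S. T < f m}. f m)" by (intro sum_mono) auto
  also have "\<dots> \<le> (\<Sum>m\<in>S. f m)" using assms by (intro sum_mono2) auto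
  finally show ?thesis .
qed

lemma exists_good_for_half:
  assumes S: "finite S" "S \<noteq> {}" and X: "finite X"
    and good: "\<And>x. x \<in> X \<Longrightarrow> card S \<le> 2 * card {m\<in>S. good m x}"
  shows "\<exists>m\<in>S. card X \<le> 2 * card {x\<in>X. good m x}"
proof (rule ccontr)
  assume "\<not> ?thesis"
  then have "(\<Sum>m\<in>S. 2 * card {x\<in>X. good m x}) < (\<Sum>m\<in>S. card X)"
    using S by (intro sum_strict_mono) auto
  also have "\<dots> = (\<Sum>x\<in>X. card S)" by simp
  also have "\<dots> \<le> (\<Sum>x\<in>X. 2 * card {m\<in>S. good m x})" using good by (intro sum_mono) auto
  also have "\<dots> = (\<Sum>m\<in>S. 2 * card {x\<in>X. good m x})"
    using sum_card_filter_swap[OF S(1) X, of good] by (simp add: sum_distrib_left[symmetric])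
  finally show False by simp
qed

lemma greedy_cover:
  assumes S: "finite S" "S \<noteq> {}" and "finite X" "X \<noteq> {}"
    and "\<And>x. x \<in> X \<Longrightarrow> card S \<le> 2 * card {m\<in>S. good m x}"
  shows "\<exists>M\<subseteq>S. 2 ^ card M \<le> 2 * card X \<and> (\<forall>x\<in>X. \<exists>m\<in>M. good m x)"
  using assms(3-5)
proof (induction "card X" arbitrary: X rule: less_induct)
  case less
  obtain m where m: "m \<in> S" "card X \<le> 2 * card {x\<in>X. good m x}"
    using exists_good_for_half[of S X good] S less.prems by blast
  define X' where "X' = {x\<in>X. \<not> good m x}"
  have "card {x\<in>X. good m x} + card X' = card X"
    unfolding X'_def using less.prems(1)
    by (subst card_Un_disjoint[symmetric]) (auto intro: arg_cong[where f=card])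
  then have X': "2 * card X' \<le> card X" using m(2) by linarith
  show ?case
  proof (cases "X' = {}")
    case True
    then show ?thesis
      using m(1) less.prems(1,2) by (intro exI[of _ "{m}"]) (auto simp: X'_def Suc_le_eq card_gt_0_iff)
  next
    case False
    then have "0 < card X'" using less.prems(1) by (simp add: X'_def card_gt_0_iff)
    then have "card X' < card X" using X' by linarith
    then have "\<exists>M\<subseteq>S. 2 ^ card M \<le> 2 * card X' \<and> (\<forall>x\<in>X'. \<exists>m\<in>M. good m x)"
      using False less.prems(1,3) by (intro less.hyps) (auto simp: X'_def)
    then obtain M where M: "M \<subseteq> S" "2 ^ card M \<le> 2 * card X'" "\<forall>x\<in>X'. \<exists>m\<in>M. good m x"
      by blast
    have "card (insert m M) \<le> Suc (card M)"
      using finite_subset[OF M(1) S(1)] by (simp add: card_insert_if)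
    then have "(2::nat) ^ card (insert m M) \<le> 2 ^ Suc (card M)"
      by (intro power_increasing) auto
    also have "\<dots> = 2 * 2 ^ card M" by simp
    also have "\<dots> \<le> 2 * card X" using M(2) X' by simp
    finally show ?thesis
      using m(1) M(1,3) by (intro exI[of _ "insert m M"]) (auto simp: X'_def)
  qed
qed

section \<open>False positives modulo primes\<close>

lemma card_prime_divisors_le:
  fixes S :: "int set" and d :: int
  assumes "finite S" "\<And>p. p \<in> S \<Longrightarrow> prime p \<and> P \<le> real_of_int p" "d \<noteq> 0" "P > 1"
  shows "real (card {p\<in>S. p dvd d}) \<le> ln \<bar>d\<bar> / ln P"
proof -
  let ?T = "{p\<in>S. p dvd d}"
  have "\<Prod>?T dvd d" using assms(1,2) by (intro prod_primes_dvd) auto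
  then have "\<bar>\<Prod>?T\<bar> \<le> \<bar>d\<bar>" by (rule dvd_imp_le_int[OF assms(3)])
  moreover have "0 < \<Prod>?T" using assms(2) by (intro prod_pos) (auto intro: prime_gt_0_int)
  ultimately have "\<Prod>?T \<le> \<bar>d\<bar>" by simp
  then have "(\<Prod>p\<in>?T. real_of_int p) \<le> real_of_int \<bar>d\<bar>"
    by (simp only: of_int_prod[symmetric] of_int_le_iff)
  moreover have "P ^ card ?T \<le> (\<Prod>p\<in>?T. real_of_int p)"
    using assms(2,4) prod_mono[of ?T "\<lambda>_. P"] by force
  ultimately have "P ^ card ?T \<le> real_of_int \<bar>d\<bar>" by linarith
  then have "ln (P ^ card ?T) \<le> ln \<bar>d\<bar>" using assms(3,4) by (subst ln_le_cancel_iff) auto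
  then show ?thesis using assms(4) by (simp add: ln_realpow field_simps)
qed

definition false_positives :: "nat set \<Rightarrow> nat set \<Rightarrow> int \<Rightarrow> nat \<Rightarrow> nat" where
  "false_positives A B m x =
     card {(a, b). a \<in> A \<and> b \<in> B \<and> [int a + int b = int x] (mod m) \<and> a + b \<noteq> x}"

lemma sum_false_positives_le:
  fixes S :: "int set"
  assumes AB: "A \<subseteq> {0..<U}" "B \<subseteq> {0..<U}" and x: "x < U"
    and S: "finite S" "\<And>p. p \<in> S \<Longrightarrow> prime p \<and> P \<le> real_of_int p" and P: "P > 1"
  shows "(\<Sum>m\<in>S. real (false_positives A B m x)) \<le> real (card A * card B) * (ln (2 * real U) / ln P)"
proof -
  define R where "R m q \<longleftrightarrow> m dvd int (fst q) + int (snd q) - int x \<and> fst q + snd q \<noteq> x" for m q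
  have fin: "finite (A \<times> B)" using AB finite_subset by blast
  have "false_positives A B m x = card {q\<in>A \<times> B. R m q}" for m
    unfolding false_positives_def R_def by (rule arg_cong[where f=card]) (auto simp: cong_iff_dvd_diff)
  then have "(\<Sum>m\<in>S. real (false_positives A B m x)) = (\<Sum>q\<in>A \<times> B. real (card {m\<in>S. R m q}))"
    using sum_card_filter_swap[OF S(1) fin, of R] by (simp flip: of_nat_sum)
  also have "\<dots> \<le> (\<Sum>q\<in>A \<times> B. ln (2 * real U) / ln P)"
  proof (rule sum_mono)
    fix q assume q: "q \<in> A \<times> B"
    show "real (card {m\<in>S. R m q}) \<le> ln (2 * real U) / ln P"
    proof (cases "fst q + snd q = x")
      case True
      then show ?thesis using x P by (simp add: R_def)
    next
      case False
      define d where "d = int (fst q) + int (snd q) - int x"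
      have "fst q < U" "snd q < U" using q AB by auto
      then have "d \<noteq> 0" "\<bar>d\<bar> < 2 * int U" using False x unfolding d_def by linarith+
      then have "ln \<bar>d\<bar> \<le> ln (2 * real U)" by (subst ln_le_cancel_iff) auto
      have "{m\<in>S. R m q} = {m\<in>S. m dvd d}" using False by (simp add: R_def d_def)
      then have "real (card {m\<in>S. R m q}) \<le> ln \<bar>d\<bar> / ln P"
        using card_prime_divisors_le[OF S \<open>d \<noteq> 0\<close> P] by simp
      also have "\<dots> \<le> ln (2 * real U) / ln P"
        using \<open>ln \<bar>d\<bar> \<le> ln (2 * real U)\<close> P by (intro divide_right_mono) auto
      finally show ?thesis .
    qed
  qed
  also have "\<dots> = real (card A * card B) * (ln (2 * real U) / ln P)"
    by (simp add: card_cartesian_product)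
  finally show ?thesis .
qed

section \<open>Covering families of moduli\<close>

definition good_moduli ::
    "nat set \<Rightarrow> nat set \<Rightarrow> nat set \<Rightarrow> real \<Rightarrow> real \<Rightarrow> int set \<Rightarrow> bool" where
  "good_moduli A B X P T M \<longleftrightarrow> finite M \<and> real (card M) \<le> 1 + log 2 (real (card X)) \<and>
     M \<subseteq> {m. P \<le> real_of_int m \<and> real_of_int m < 8 * P} \<and>
     (\<forall>x\<in>X. \<exists>m\<in>M. real (false_positives A B m x) \<le> T)"

lemma good_moduli_mono: "good_moduli A B X P T M \<Longrightarrow> T \<le> T' \<Longrightarrow> good_moduli A B X P T' M"
  unfolding good_moduli_def by (meson order_trans)

lemma good_moduli_singleton:
  assumes "finite A" "finite B" "finite X" "X \<noteq> {}" "P \<ge> 1"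
  shows "good_moduli A B X P (real (card A * card B)) {\<lceil>P\<rceil>}"
proof -
  have "false_positives A B m x \<le> card (A \<times> B)" for m x
    unfolding false_positives_def using assms(1,2) by (intro card_mono) auto
  then have "real (false_positives A B m x) \<le> real (card A * card B)" for m x
    by (simp only: of_nat_le_iff card_cartesian_product)
  moreover have "0 \<le> log 2 (real (card X))" using assms(3,4) by (simp add: card_gt_0_iff Suc_le_eq)
  moreover have "real_of_int \<lceil>P\<rceil> < 8 * P" using assms(5) by linarith
  ultimately show ?thesis unfolding good_moduli_def by (auto simp: card_cartesian_product)
qed

lemma half_of_window_has_few_false_positives:
  fixes P :: real
  defines "S \<equiv> {p::int. prime p \<and> P \<le> p \<and> p < 8 * P}"
  assumes AB: "A \<subseteq> {0..<U}" "B \<subseteq> {0..<U}" "A \<noteq> {}" "B \<noteq> {}" and x: "x < U"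
    and P: "P > 1" and window: "P \<le> 2 * real (card S) * ln P"
  shows "card S \<le> 2 * card {m\<in>S. real (false_positives A B m x) \<le> 4 * real (card A * card B) * ln (2 * real U) / P}"
proof -
  define T where "T = 4 * real (card A * card B) * ln (2 * real U) / P"
  define K where "K = real (card A * card B) * ln (2 * real U)"
  let ?bad = "{m\<in>S. T < real (false_positives A B m x)}"
  have finS: "finite S" unfolding S_def by (rule finite_int_window)
  have "finite A" "finite B" using AB(1,2) finite_subset by blast+
  then have "card A > 0" "card B > 0" using AB(3,4) by auto
  with x P have T: "T > 0" by (simp add: T_def)
  have "1 / ln P \<le> 2 * real (card S) / P" using window P by (simp add: field_simps)
  moreover have "K \<ge> 0" using x by (simp add: K_def)
  ultimately have window_bound: "K * (1 / ln P) \<le> K * (2 * real (card S) / P)" by (intro mult_left_mono)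
  have "real (card ?bad) * T \<le> (\<Sum>m\<in>S. real (false_positives A B m x))"
    using finS by (intro card_exceeding_mult_le_sum) auto
  also have "\<dots> \<le> K * (1 / ln P)"
    using sum_false_positives_le[OF AB(1,2) x finS _ P] by (simp add: S_def K_def)
  also have "\<dots> \<le> K * (2 * real (card S) / P)" by (rule window_bound)
  also have "\<dots> = real (card S) / 2 * T" by (simp add: K_def T_def)
  finally have "real (card ?bad) \<le> real (card S) / 2" using T by simp
  moreover have "card ?bad + card {m\<in>S. real (false_positives A B m x) \<le> T} = card S"
    using finS by (subst card_Un_disjoint[symmetric]) (auto intro: arg_cong[where f=card])
  ultimately show ?thesis unfolding T_def by linarith
qed

lemma good_moduli_from_prime_window:
  fixes P :: real
  assumes AB: "A \<subseteq> {0..<U}" "B \<subseteq> {0..<U}" "A \<noteq> {}" "B \<noteq> {}"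
    and X: "X \<subseteq> {0..<U}" "X \<noteq> {}" and P: "P > 1"
    and window: "P \<le> 2 * real (card {p::int. prime p \<and> P \<le> p \<and> p < 8 * P}) * ln P"
  shows "\<exists>M. good_moduli A B X P (4 * real (card A * card B) * ln (2 * real U) / P) M"
proof -
  define S where "S = {p::int. prime p \<and> P \<le> p \<and> p < 8 * P}"
  define T where "T = 4 * real (card A * card B) * ln (2 * real U) / P"
  have finS: "finite S" unfolding S_def by (rule finite_int_window)
  have "card S > 0" by (rule ccontr) (use window P in \<open>simp add: S_def\<close>)
  then have "S \<noteq> {}" by auto
  have finX: "finite X" using X(1) finite_subset by blast
  have "card S \<le> 2 * card {m\<in>S. real (false_positives A B m x) \<le> T}" if "x \<in> X" for x
    using half_of_window_has_few_false_positives[OF AB _ P window] that X(1) by (auto simp: S_def T_def)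
  with greedy_cover[of S X "\<lambda>m x. real (false_positives A B m x) \<le> T"] finS \<open>S \<noteq> {}\<close> finX X(2)
  obtain M where M: "M \<subseteq> S" "2 ^ card M \<le> 2 * card X"
    "\<forall>x\<in>X. \<exists>m\<in>M. real (false_positives A B m x) \<le> T"
    by blast
  have "real (card M) \<le> log 2 (real (2 * card X))" using M(2) by (rule le_log2_of_power)
  also have "\<dots> = 1 + log 2 (real (card X))"
    using finX X(2) by (simp add: log_mult card_gt_0_iff)
  finally have "real (card M) \<le> 1 + log 2 (real (card X))" .
  moreover have "finite M" using M(1) finS by (rule finite_subset)
  moreover have "M \<subseteq> {m. P \<le> real_of_int m \<and> real_of_int m < 8 * P}" using M(1) by (auto simp: S_def)
  ultimately show ?thesis using M(3) unfolding good_moduli_def T_def[symmetric] by blast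
qed

lemma powr_three_halves: "x \<ge> 0 \<Longrightarrow> x powr 1.5 = x * sqrt (x::real)"
  using powr_add[of x 1 "1/2"] by (cases "x = 0") (simp_all add: powr_half_sqrt)

lemma ln_le_cube_ratio:
  assumes "x \<ge> (2::real)"
  shows "1 \<le> (ln x / ln 2) ^ 3" "ln x \<le> (ln x / ln 2) ^ 3"
proof -
  have t: "1 \<le> ln x / ln 2" using assms by simp
  then show "1 \<le> (ln x / ln 2) ^ 3" by simp
  have t0: "0 \<le> ln x / ln 2" using t by linarith
  have "ln x = ln 2 * (ln x / ln 2)" by simp
  also have "\<dots> \<le> 1 * (ln x / ln 2) ^ 3"
    using t0 ln_2_less_1 power_increasing[OF _ t, of 1 3] by (intro mult_mono) auto
  finally show "ln x \<le> (ln x / ln 2) ^ 3" by simp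
qed

lemma good_moduli_for_large_n:
  obtains n0 where "\<And>n U A B X. n \<ge> n0 \<Longrightarrow> U \<ge> 2 \<Longrightarrow>
    A \<subseteq> {0..<U} \<Longrightarrow> B \<subseteq> {0..<U} \<Longrightarrow> X \<subseteq> {0..<U} \<Longrightarrow>
    card A = n \<Longrightarrow> card B = n \<Longrightarrow> X \<noteq> {} \<Longrightarrow>
    \<exists>M. good_moduli A B X (real n powr 1.5) (8 * sqrt (real n) * ln (real U)) M"
proof -
  have "filterlim (\<lambda>n. real n powr 1.5) at_top sequentially" by real_asymp
  with eventually_many_primes_in_real_window
  have "\<forall>\<^sub>F n in sequentially. real n powr 1.5 \<le>
      2 * real (card {p::int. prime p \<and> real n powr 1.5 \<le> p \<and> p < 8 * real n powr 1.5}) * ln (real n powr 1.5)"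
    by (rule eventually_compose_filterlim)
  then obtain n0 where n0: "\<And>n. n \<ge> n0 \<Longrightarrow> real n powr 1.5 \<le>
      2 * real (card {p::int. prime p \<and> real n powr 1.5 \<le> p \<and> p < 8 * real n powr 1.5}) * ln (real n powr 1.5)"
    unfolding eventually_sequentially by blast
  show thesis
  proof (rule that[of "max 2 n0"])
    fix n U :: nat and A B X :: "nat set"
    assume n: "n \<ge> max 2 n0" and U: "U \<ge> 2" and AB: "A \<subseteq> {0..<U}" "B \<subseteq> {0..<U}"
      and X: "X \<subseteq> {0..<U}" "X \<noteq> {}" and card: "card A = n" "card B = n"
    let ?P = "real n powr 1.5"
    have P: "?P = real n * sqrt (real n)" by (rule powr_three_halves) simp
    have "2 * 1 \<le> real n * sqrt (real n)" using n by (intro mult_mono) auto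
    then have "?P > 1" using P by simp
    moreover have "A \<noteq> {}" "B \<noteq> {}" using card n by auto
    moreover have "?P \<le> 2 * real (card {p::int. prime p \<and> ?P \<le> p \<and> p < 8 * ?P}) * ln ?P"
      using n by (intro n0) simp
    ultimately obtain M where M: "good_moduli A B X ?P (4 * real (card A * card B) * ln (2 * real U) / ?P) M"
      using good_moduli_from_prime_window[OF AB(1,2) _ _ X] by blast
    have "4 * real (card A * card B) * ln (2 * real U) / ?P = 4 * sqrt (real n) * ln (2 * real U)"
      using P card real_div_sqrt[of "real n"] by (simp add: field_simps)
    also have "\<dots> \<le> 4 * sqrt (real n) * (2 * ln (real U))"
    proof -
      have "ln 2 \<le> ln (real U)" using U by simp
      then have "ln (2 * real U) \<le> 2 * ln (real U)" using U by (simp add: ln_mult)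
      then show ?thesis by (intro mult_left_mono) auto
    qed
    also have "\<dots> = 8 * sqrt (real n) * ln (real U)" by simp
    finally show "\<exists>M. good_moduli A B X ?P (8 * sqrt (real n) * ln (real U)) M"
      using M good_moduli_mono by blast
  qed
qed

lemma good_moduli_exist:
  "\<exists>K>0. \<forall>U n A B X. U \<ge> 2 \<longrightarrow> n \<ge> 2 \<longrightarrow>
     A \<subseteq> {0..<U} \<longrightarrow> B \<subseteq> {0..<U} \<longrightarrow> X \<subseteq> {0..<U} \<longrightarrow>
     card A = n \<longrightarrow> card B = n \<longrightarrow> X \<noteq> {} \<longrightarrow>
     (\<exists>M. good_moduli A B X (real n powr 1.5) (K * sqrt (real n) * ln (real U) ^ 3) M)"
proof -
  obtain n0 where large: "\<And>n U A B X. n \<ge> n0 \<Longrightarrow> U \<ge> 2 \<Longrightarrow>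
    A \<subseteq> {0..<U} \<Longrightarrow> B \<subseteq> {0..<U} \<Longrightarrow> X \<subseteq> {0..<U} \<Longrightarrow>
    card A = n \<Longrightarrow> card B = n \<Longrightarrow> X \<noteq> {} \<Longrightarrow>
    \<exists>M. good_moduli A B X (real n powr 1.5) (8 * sqrt (real n) * ln (real U)) M"
    using good_moduli_for_large_n by blast
  define K where "K = (8 + real (n0 * n0)) / ln 2 ^ 3"
  have "\<exists>M. good_moduli A B X (real n powr 1.5) (K * sqrt (real n) * ln (real U) ^ 3) M"
    if U: "U \<ge> 2" and n: "n \<ge> 2" and sub: "A \<subseteq> {0..<U}" "B \<subseteq> {0..<U}" "X \<subseteq> {0..<U}"
      and card: "card A = n" "card B = n" and X: "X \<noteq> {}" for U n A B X
  proof -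
    have ratio: "1 \<le> (ln U / ln 2) ^ 3" "ln U \<le> (ln U / ln 2) ^ 3"
      using U ln_le_cube_ratio[of "real U"] by simp_all
    have K: "K * sqrt (real n) * ln (real U) ^ 3 = (8 + real (n0 * n0)) * sqrt (real n) * (ln U / ln 2) ^ 3"
      by (simp add: K_def power_divide)
    show ?thesis
    proof (cases "n \<ge> n0")
      case True
      have "8 * sqrt (real n) * ln (real U) \<le> K * sqrt (real n) * ln (real U) ^ 3"
        unfolding K using ratio U by (intro mult_mono) auto
      then show ?thesis using large[OF True U sub card X] good_moduli_mono by blast
    next
      case False
      have "card A * card B \<le> n0 * n0" using False card by (intro mult_le_mono) auto
      then have "real (card A * card B) \<le> (8 + real (n0 * n0)) * 1 * 1"
        by (simp flip: of_nat_mult)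
      also have "\<dots> \<le> K * sqrt (real n) * ln (real U) ^ 3"
        unfolding K using ratio n by (intro mult_mono) auto
      finally show ?thesis
        using good_moduli_singleton[of A B X "real n powr 1.5"] good_moduli_mono finite_subset[OF sub(1)]
          finite_subset[OF sub(2)] finite_subset[OF sub(3)] X n ge_one_powr_ge_zero[of "real n" "1.5"]
        by force
    qed
  qed
  moreover have "K > 0" unfolding K_def by (intro divide_pos_pos add_pos_nonneg) auto
  ultimately show ?thesis by blast
qed

theorem mainTheorem8:
  shows "\<exists>K::real. K > 0 \<and>
    (\<forall>(U::nat) (n::nat) (A::nat set) (B::nat set) (X::nat set).
       U \<ge> 2 \<longrightarrow> n \<ge> 2 \<longrightarrow>
       A \<subseteq> {0..<U} \<longrightarrow> B \<subseteq> {0..<U} \<longrightarrow> X \<subseteq> {0..<U} \<longrightarrow>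
       card A = n \<longrightarrow> card B = n \<longrightarrow> X \<noteq> {} \<longrightarrow>
       (\<exists>M::int set. finite M \<and>
          real (card M) \<le> 1 + log 2 (real (card X)) \<and>
          M \<subseteq> {m. real n powr 1.5 \<le> real_of_int m \<and> real_of_int m < 8 * real n powr 1.5} \<and>
          (\<forall>x\<in>X. \<exists>m\<in>M.
             real (card {(a, b). a \<in> A \<and> b \<in> B \<and>
                      [int a + int b = int x] (mod m) \<and> a + b \<noteq> x})
             \<le> K * sqrt (real n) * (ln (real U)) ^ 3)))"
  using good_moduli_exist unfolding good_moduli_def false_positives_def by blast

end
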